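(* Let $G$ be a finite transitive permutation group whose point stabilizers have order $2$, and let $\mathcal{F}$ be a basic intersecting set of $G$. Then the subgroup $\langle \mathcal{F}\rangle$ generated by $\mathcal{F}$ is an elementary abelian $2$-group.
   Context: For a permutation group $G$ on a finite set $V$, a subset $\mathcal{F}\subseteq G$ is intersecting if for all $g,h\in\mathcal{F}$ there is $v\in V$ with $g(v)=h(v)$. A basic intersecting set is an intersecting set containing the identity. *)

theory Defs
  imports "HOL-Combinatorics.Permutations"
begin

definition perm_group :: "'a set \<Rightarrow> ('a \<Rightarrow> 'a) set \<Rightarrow> bool" where
  "perm_group V G \<longleftrightarrow> finite V \<and> id \<in> G \<and> (\<forall>g\<in>G. g permutes V)
     \<and> (\<forall>g\<in>G. \<forall>h\<in>G. g \<circ> h \<in> G) \<and> (\<forall>g\<in>G. inv g \<in> G)"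

definition transitive_on :: "'a set \<Rightarrow> ('a \<Rightarrow> 'a) set \<Rightarrow> bool" where
  "transitive_on V G \<longleftrightarrow> (\<forall>u\<in>V. \<forall>v\<in>V. \<exists>g\<in>G. g u = v)"

definition stabilizer :: "('a \<Rightarrow> 'a) set \<Rightarrow> 'a \<Rightarrow> ('a \<Rightarrow> 'a) set" where
  "stabilizer G v = {g \<in> G. g v = v}"

definition intersecting :: "'a set \<Rightarrow> ('a \<Rightarrow> 'a) set \<Rightarrow> bool" where
  "intersecting V F \<longleftrightarrow> (\<forall>g\<in>F. \<forall>h\<in>F. \<exists>v\<in>V. g v = h v)"

definition basic_intersecting :: "'a set \<Rightarrow> ('a \<Rightarrow> 'a) set \<Rightarrow> ('a \<Rightarrow> 'a) set \<Rightarrow> bool" where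
  "basic_intersecting V G F \<longleftrightarrow> F \<subseteq> G \<and> intersecting V F \<and> id \<in> F"

definition generated_subgroup :: "('a \<Rightarrow> 'a) set \<Rightarrow> ('a \<Rightarrow> 'a) set \<Rightarrow> ('a \<Rightarrow> 'a) set" where
  "generated_subgroup G F = \<Inter>{H. H \<subseteq> G \<and> F \<subseteq> H \<and> id \<in> H
      \<and> (\<forall>g\<in>H. \<forall>h\<in>H. g \<circ> h \<in> H) \<and> (\<forall>g\<in>H. inv g \<in> H)}"

definition elementary_abelian_2_group :: "('a \<Rightarrow> 'a) set \<Rightarrow> bool" where
  "elementary_abelian_2_group H \<longleftrightarrow>
     (\<forall>g\<in>H. \<forall>h\<in>H. g \<circ> h = h \<circ> g) \<and> (\<forall>g\<in>H. g \<circ> g = id)"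

end

theory Submission
  imports Defs
begin

text \<open>Every element of a basic intersecting set agrees with the identity somewhere, so it
  lies in a point stabilizer, a group of order two, and is therefore an involution. For two
  elements g, h of the set, g\<inverse> h fixes the point where g and h agree, so it is an
  involution as well; for involutions g, h this forces gh = hg. Hence the set consists of
  pairwise commuting involutions, and the group they generate is elementary abelian.\<close>

definition is_subgroup :: "('a \<Rightarrow> 'a) set \<Rightarrow> ('a \<Rightarrow> 'a) set \<Rightarrow> bool" where
  "is_subgroup H G \<longleftrightarrow> H \<subseteq> G \<and> id \<in> H
     \<and> (\<forall>g\<in>H. \<forall>h\<in>H. g \<circ> h \<in> H) \<and> (\<forall>g\<in>H. inv g \<in> H)"

definition centralizer :: "('a \<Rightarrow> 'a) set \<Rightarrow> ('a \<Rightarrow> 'a) set \<Rightarrow> ('a \<Rightarrow> 'a) set" where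
  "centralizer G S = {g \<in> G. \<forall>s\<in>S. g \<circ> s = s \<circ> g}"

lemma generated_subgroup_least:
  assumes "is_subgroup H G" "F \<subseteq> H"
  shows "generated_subgroup G F \<subseteq> H"
  using assms unfolding generated_subgroup_def is_subgroup_def by (intro Inter_lower) auto

lemma generated_subgroup_superset: "F \<subseteq> generated_subgroup G F"
  unfolding generated_subgroup_def by blast

lemma is_subgroup_generated_subgroup:
  assumes "perm_group V G" "F \<subseteq> G"
  shows "is_subgroup (generated_subgroup G F) G"
  using assms unfolding generated_subgroup_def is_subgroup_def perm_group_def by blast

lemma is_subgroup_stabilizer:
  assumes "perm_group V G"
  shows "is_subgroup (stabilizer G v) G"
proof -
  have "inv g v = v" if "g \<in> G" "g v = v" for g
    using that assms permutes_inverses(2) unfolding perm_group_def by metis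
  then show ?thesis
    using assms unfolding is_subgroup_def stabilizer_def perm_group_def by auto
qed

lemma comp_inv_commute:
  assumes "bij g" "g \<circ> x = x \<circ> g"
  shows "inv g \<circ> x = x \<circ> inv g"
proof
  fix y
  have "g (x (inv g y)) = x y"
    using assms by (metis bij_inv_eq_iff comp_apply)
  then show "(inv g \<circ> x) y = (x \<circ> inv g) y"
    using assms(1) by (metis bij_inv_eq_iff comp_apply)
qed

lemma is_subgroup_centralizer:
  assumes "perm_group V G"
  shows "is_subgroup (centralizer G S) G"
proof -
  have "inv g \<in> centralizer G S" if g: "g \<in> centralizer G S" for g
  proof -
    have "bij g"
      using g assms permutes_bij unfolding centralizer_def perm_group_def by auto
    then show ?thesis
      using g assms comp_inv_commute unfolding centralizer_def perm_group_def by auto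
  qed
  moreover have "g \<circ> h \<in> centralizer G S"
    if g: "g \<in> centralizer G S" and h: "h \<in> centralizer G S" for g h
  proof -
    have "(g \<circ> h) \<circ> s = s \<circ> (g \<circ> h)" if "s \<in> S" for s
    proof -
      have "g \<circ> s = s \<circ> g" "h \<circ> s = s \<circ> h"
        using g h that unfolding centralizer_def by auto
      then show ?thesis by (metis comp_assoc)
    qed
    then show ?thesis
      using g h assms unfolding centralizer_def perm_group_def by auto
  qed
  moreover have "centralizer G S \<subseteq> G" "id \<in> centralizer G S"
    using assms unfolding centralizer_def perm_group_def by auto
  ultimately show ?thesis
    unfolding is_subgroup_def by blast
qed

lemma is_subgroup_involutions:
  assumes "is_subgroup H G" "\<forall>g\<in>H. \<forall>h\<in>H. g \<circ> h = h \<circ> g"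
  shows "is_subgroup {g \<in> H. g \<circ> g = id} G"
proof -
  have "(g \<circ> h) \<circ> (g \<circ> h) = id" if "g \<in> H" "h \<in> H" "g \<circ> g = id" "h \<circ> h = id" for g h
  proof -
    have "(g \<circ> h) \<circ> (g \<circ> h) = g \<circ> (h \<circ> g) \<circ> h" by (simp add: o_assoc)
    also have "\<dots> = (g \<circ> g) \<circ> (h \<circ> h)" using assms(2) that(1,2) by (simp add: o_assoc)
    finally show ?thesis using that(3,4) by simp
  qed
  moreover have "inv g = g" if "g \<circ> g = id" for g
    using that by (metis inv_unique_comp)
  ultimately show ?thesis
    using assms(1) unfolding is_subgroup_def by auto
qed

lemma elementary_abelian_2_group_generated:
  assumes G: "perm_group V G" and "F \<subseteq> G"
    and invol: "\<And>f. f \<in> F \<Longrightarrow> f \<circ> f = id"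
    and comm: "\<And>f f'. f \<in> F \<Longrightarrow> f' \<in> F \<Longrightarrow> f \<circ> f' = f' \<circ> f"
  shows "elementary_abelian_2_group (generated_subgroup G F)"
proof -
  let ?H = "generated_subgroup G F"
  have "F \<subseteq> centralizer G F"
    using assms(2) comm unfolding centralizer_def by blast
  then have "?H \<subseteq> centralizer G F"
    by (rule generated_subgroup_least[OF is_subgroup_centralizer[OF G]])
  then have "F \<subseteq> centralizer G ?H"
    using assms(2) unfolding centralizer_def by fastforce
  then have "?H \<subseteq> centralizer G ?H"
    by (rule generated_subgroup_least[OF is_subgroup_centralizer[OF G]])
  then have abelian: "\<forall>g\<in>?H. \<forall>h\<in>?H. g \<circ> h = h \<circ> g"
    unfolding centralizer_def by blast
  have "is_subgroup {g \<in> ?H. g \<circ> g = id} G"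
    using is_subgroup_involutions is_subgroup_generated_subgroup[OF G assms(2)] abelian .
  moreover have "F \<subseteq> {g \<in> ?H. g \<circ> g = id}"
    using generated_subgroup_superset invol by blast
  ultimately have "?H \<subseteq> {g \<in> ?H. g \<circ> g = id}"
    by (rule generated_subgroup_least)
  then show ?thesis
    using abelian unfolding elementary_abelian_2_group_def by blast
qed

lemma card_two_subgroup_involution:
  assumes "perm_group V G" "is_subgroup S G" "card S = 2" "g \<in> S"
  shows "g \<circ> g = id"
proof (rule ccontr)
  assume gg: "g \<circ> g \<noteq> id"
  then have "g \<noteq> id" by auto
  moreover have "g \<circ> g \<noteq> g"
  proof
    assume "g \<circ> g = g"
    then have "inv g \<circ> g \<circ> g = inv g \<circ> g"
      by (simp add: o_assoc[symmetric])
    moreover have "inv g \<circ> g = id"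
      using assms(1,2,4) permutes_inj inv_o_cancel
      unfolding perm_group_def is_subgroup_def by blast
    ultimately show False
      using \<open>g \<noteq> id\<close> by simp
  qed
  ultimately have "card {id, g, g \<circ> g} = 3"
    using gg by auto
  moreover have "{id, g, g \<circ> g} \<subseteq> S"
    using assms(2,4) unfolding is_subgroup_def by auto
  moreover have "finite S"
    using assms(3) card.infinite by fastforce
  ultimately have "3 \<le> card S"
    by (metis card_mono)
  with assms(3) show False
    by simp
qed

lemma point_fixer_involution:
  assumes "perm_group V G" "\<forall>v\<in>V. card (stabilizer G v) = 2"
    and "g \<in> G" "v \<in> V" "g v = v"
  shows "g \<circ> g = id"
proof -
  have "g \<in> stabilizer G v"
    using assms(3,5) unfolding stabilizer_def by simp
  then show ?thesis
    using card_two_subgroup_involution[OF assms(1) is_subgroup_stabilizer[OF assms(1)]] assms(2,4)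
    by blast
qed

lemma involutions_commute_if_product_involution:
  assumes "g \<circ> g = id" "h \<circ> h = id" "(g \<circ> h) \<circ> (g \<circ> h) = id"
  shows "g \<circ> h = h \<circ> g"
proof
  fix x
  have "g (g y) = y" "h (h y) = y" "g (h (g (h y))) = y" for y
    using assms by (metis comp_apply id_apply)+
  then have "g (h x) = g (h (g (h (h (g x)))))"
    by simp
  also have "\<dots> = h (g x)"
    by fact
  finally show "(g \<circ> h) x = (h \<circ> g) x"
    by simp
qed

theorem lemma3p1:
  fixes V :: "'a set" and G F :: "('a \<Rightarrow> 'a) set"
  assumes "perm_group V G"
    and "transitive_on V G"
    and "\<forall>v\<in>V. card (stabilizer G v) = 2"
    and "basic_intersecting V G F"
  shows "elementary_abelian_2_group (generated_subgroup G F)"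
proof -
  have FG: "F \<subseteq> G" and inter: "intersecting V F" and "id \<in> F"
    using assms(4) unfolding basic_intersecting_def by auto
  have invol: "f \<circ> f = id" if f: "f \<in> F" for f
  proof -
    obtain v where "v \<in> V" "f v = v"
      using inter[unfolded intersecting_def, rule_format, OF f \<open>id \<in> F\<close>] by auto
    then show ?thesis
      using point_fixer_involution[OF assms(1,3)] FG f by blast
  qed
  have "f \<circ> f' = f' \<circ> f" if f: "f \<in> F" and f': "f' \<in> F" for f f'
  proof -
    obtain v where "v \<in> V" "f v = f' v"
      using inter[unfolded intersecting_def, rule_format, OF f f'] by blast
    then have "(f \<circ> f') v = v"
      using pointfree_idE[OF invol[OF f]] by (metis comp_apply)
    moreover have "f \<circ> f' \<in> G"
      using assms(1) FG f f' unfolding perm_group_def by blast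
    ultimately have "(f \<circ> f') \<circ> (f \<circ> f') = id"
      using point_fixer_involution[OF assms(1,3)] \<open>v \<in> V\<close> by blast
    then show ?thesis
      using involutions_commute_if_product_involution invol f f' by blast
  qed
  then show ?thesis
    using elementary_abelian_2_group_generated[OF assms(1) FG invol] by blast
qed

end
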